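(* Let $\alpha\in[0,1)$ and let $$X(\sqrt{t},\alpha)=\{\sqrt{n}\,e^{2\pi i n\alpha}\ :\ n\in\mathbb{N}\}\subset\mathbb{C}.$$ The following four statements are equivalent: (a) $X(\sqrt{t},\alpha)$ is relatively dense; (b) $X(\sqrt{t},\alpha)$ is uniformly discrete; (c) $X(\sqrt{t},\alpha)$ is a Delone set; (d) $\alpha$ is badly approximable.
   Context: $\mathbb{C}$ is identified with $\mathbb{R}^2$, and $B(x,r)$ denotes the open disk of radius $r$ centered at $x$. A set $X\subset\mathbb{C}$ is $r$-relatively dense if $B(x,r)\cap X\neq\emptyset$ for every $x\in\mathbb{C}$, and relatively dense if it is $r$-relatively dense for some $r>0$. It is $s$-uniformly discrete if $\mathrm{Card}(B(x,s)\cap X)\le 1$ for every $x\in\mathbb{C}$, and uniformly discrete if this holds for some $s>0$. A Delone set is a set that is both relatively dense and uniformly discrete. A real number $\alpha$ is badly approximable if there is a constant $C>0$ with $q|q\alpha-p|\ge C$ for all $(p,q)\in\mathbb{Z}\times\mathbb{N}$. *)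

theory Defs
  imports "HOL-Analysis.Analysis"
begin

definition rel_dense_r :: "real \<Rightarrow> complex set \<Rightarrow> bool" where
  "rel_dense_r r X \<longleftrightarrow> (\<forall>x::complex. ball x r \<inter> X \<noteq> {})"

definition rel_dense :: "complex set \<Rightarrow> bool" where
  "rel_dense X \<longleftrightarrow> (\<exists>r>0. rel_dense_r r X)"

definition unif_discrete_s :: "real \<Rightarrow> complex set \<Rightarrow> bool" where
  "unif_discrete_s s X \<longleftrightarrow> (\<forall>x::complex. card (ball x s \<inter> X) \<le> 1 \<and> finite (ball x s \<inter> X))"

definition unif_discrete :: "complex set \<Rightarrow> bool" where
  "unif_discrete X \<longleftrightarrow> (\<exists>s>0. unif_discrete_s s X)"

definition delone :: "complex set \<Rightarrow> bool" where
  "delone X \<longleftrightarrow> rel_dense X \<and> unif_discrete X"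

definition badly_approximable :: "real \<Rightarrow> bool" where
  "badly_approximable \<alpha> \<longleftrightarrow>
     (\<exists>C>0. \<forall>(p::int) (q::nat). q \<ge> 1 \<longrightarrow> real q * \<bar>real q * \<alpha> - real_of_int p\<bar> \<ge> C)"

definition sqrt_spiral :: "real \<Rightarrow> complex set" where
  "sqrt_spiral \<alpha> = {complex_of_real (sqrt (real n)) * exp (2 * complex_of_real pi * \<i> * of_nat n * complex_of_real \<alpha>) | n::nat. n \<ge> 1}"

end

theory Submission
  imports Defs "HOL-Analysis.Kronecker_Approximation_Theorem"
begin

(* Write P n = sqrt n * e(n alpha) with e(x) = exp(2 pi i x). For m = n + q the points P m and
   P n differ radially by about q / (2 sqrt n) and angularly by about sqrt n * ||q alpha||.
   If q ||q alpha|| >= C for all q, one of these two gaps is at least min(1/4, C), so the spiral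
   is uniformly discrete. For relative density, take a target point of modulus rho, a Dirichlet
   denominator k <= rho (so k >= C rho) and the k consecutive indices n >= rho^2: they stay
   within distance 1 of the circle of radius rho, and their angles n alpha are 1/k-dense mod 1.
   Conversely, if q ||q alpha|| is tiny then P(q^2 k) and P(q^2 k + q) are arbitrarily close,
   and near the circle of radius 4 r q the angles n alpha cluster around the multiples of 1/q,
   leaving an empty disc of radius r around the point at the midpoint angle. *)

lemma sin_ge_third:
  fixes x :: real
  assumes "0 \<le> x" "x \<le> 2"
  shows "x / 3 \<le> sin x"
proof -
  have "\<bar>sin x - (\<Sum>m<3. sin_coeff m * x ^ m)\<bar> \<le> inverse (fact 3) * \<bar>x\<bar> ^ 3"
    by (rule Maclaurin_sin_bound)
  moreover have "(\<Sum>m<3. sin_coeff m * x ^ m) = x"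
    by (simp add: numeral_3_eq_3 sin_coeff_Suc cos_coeff_def)
  moreover have "inverse (fact 3 :: real) = 1/6"
    by (simp add: numeral_3_eq_3)
  ultimately have taylor: "\<bar>sin x - x\<bar> \<le> x ^ 3 / 6"
    using assms by simp
  have "x * x\<^sup>2 \<le> x * 2\<^sup>2"
    using assms by (intro mult_left_mono power_mono) auto
  then have "x ^ 3 \<le> 4 * x"
    by (simp add: power3_eq_cube power2_eq_square mult_ac)
  with taylor show ?thesis
    by linarith
qed

lemma norm_cis_diff: "cmod (cis a - cis b) = 2 * \<bar>sin ((a - b) / 2)\<bar>"
proof -
  have "cis a - cis b = cis b * (cis (a - b) - 1)"
    by (simp add: right_diff_distrib cis_mult)
  then show ?thesis
    by (simp add: norm_mult dist_exp_i_1 [of "a - b", folded cis_conv_exp])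
qed

lemma norm_cis_diff_le: "cmod (cis a - cis b) \<le> \<bar>a - b\<bar>"
  using abs_sin_x_le_abs_x [of "(a - b) / 2"] by (simp add: norm_cis_diff)

lemma cis_2pi_diff_int: "cis (2 * pi * (x - of_int j)) = cis (2 * pi * x)"
proof -
  have "cis (2 * pi * (x - of_int j)) = cis (2 * pi * x) * cis (2 * pi * of_int (- j))"
    by (simp add: cis_mult algebra_simps)
  also have "cis (2 * pi * of_int (- j)) = 1"
    by (rule cis_multiple_2pi) simp
  finally show ?thesis
    by simp
qed

lemma norm_cis_2pi_diff_le:
  "cmod (cis (2 * pi * x) - cis (2 * pi * y)) \<le> 2 * pi * \<bar>x - y - of_int j\<bar>"
proof -
  have "cmod (cis (2 * pi * x) - cis (2 * pi * y))
      = cmod (cis (2 * pi * (x - of_int j)) - cis (2 * pi * y))"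
    by (simp add: cis_2pi_diff_int)
  also have "\<dots> \<le> \<bar>2 * pi * (x - of_int j) - 2 * pi * y\<bar>"
    by (rule norm_cis_diff_le)
  also have "\<dots> = 2 * pi * \<bar>x - y - of_int j\<bar>"
    by (simp add: abs_mult flip: right_diff_distrib)
  finally show ?thesis .
qed

lemma norm_cis_2pi_diff_ge:
  assumes "\<And>j::int. \<delta> \<le> \<bar>x - y - of_int j\<bar>"
  shows "2 * \<delta> \<le> cmod (cis (2 * pi * x) - cis (2 * pi * y))"
proof -
  define j where "j = round (x - y)"
  define s where "s = x - y - of_int j"
  have s_half: "\<bar>s\<bar> \<le> 1/2"
    unfolding s_def j_def using of_int_round_abs_le [of "x - y"] by linarith
  have "cmod (cis (2 * pi * x) - cis (2 * pi * y))
      = cmod (cis (2 * pi * (x - of_int j)) - cis (2 * pi * y))"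
    by (simp add: cis_2pi_diff_int)
  also have "\<dots> = 2 * \<bar>sin (pi * s)\<bar>"
  proof -
    have "(2 * pi * (x - of_int j) - 2 * pi * y) / 2 = pi * s"
      by (simp add: s_def field_simps)
    then show ?thesis
      by (simp only: norm_cis_diff)
  qed
  also have "\<bar>sin (pi * s)\<bar> = \<bar>sin (pi * \<bar>s\<bar>)\<bar>"
    by (cases "0 \<le> s") simp_all
  also have "\<dots> = sin (pi * \<bar>s\<bar>)"
    using s_half by (intro abs_of_nonneg sin_ge_zero) auto
  finally have norm_eq: "cmod (cis (2 * pi * x) - cis (2 * pi * y)) = 2 * sin (pi * \<bar>s\<bar>)" .
  have "pi * \<bar>s\<bar> \<le> pi * (1/2)"
    using s_half by (intro mult_left_mono) auto
  then have "pi * \<bar>s\<bar> \<le> 2"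
    using pi_less_4 by linarith
  then have "pi * \<bar>s\<bar> / 3 \<le> sin (pi * \<bar>s\<bar>)"
    by (intro sin_ge_third) auto
  moreover have "3 * \<bar>s\<bar> \<le> pi * \<bar>s\<bar>"
    using pi_gt3 by (intro mult_right_mono) auto
  moreover have "\<delta> \<le> \<bar>s\<bar>"
    using assms [of j] by (simp add: s_def)
  ultimately show ?thesis
    using norm_eq by linarith
qed

lemma norm_scaleR_diff_ge_radial:
  fixes u v :: "'a::real_normed_vector"
  assumes "norm u = 1" "norm v = 1" "0 \<le> a" "0 \<le> b"
  shows "\<bar>a - b\<bar> \<le> norm (a *\<^sub>R u - b *\<^sub>R v)"
  using norm_triangle_ineq3 [of "a *\<^sub>R u" "b *\<^sub>R v"] assms by simp

lemma norm_scaleR_diff_le: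
  fixes u v :: "'a::real_normed_vector"
  assumes "norm u = 1" "0 \<le> b"
  shows "norm (a *\<^sub>R u - b *\<^sub>R v) \<le> \<bar>a - b\<bar> + b * norm (u - v)"
proof -
  have "a *\<^sub>R u - b *\<^sub>R v = (a - b) *\<^sub>R u + b *\<^sub>R (u - v)"
    by (simp add: algebra_simps)
  then show ?thesis
    using norm_triangle_ineq [of "(a - b) *\<^sub>R u" "b *\<^sub>R (u - v)"] assms by simp
qed

lemma norm_scaleR_diff_ge_angular:
  fixes u v :: "'a::real_normed_vector"
  assumes "norm u = 1" "norm v = 1" "0 \<le> a" "0 \<le> b"
  shows "b * norm (u - v) \<le> 2 * norm (a *\<^sub>R u - b *\<^sub>R v)"
proof -
  have "b *\<^sub>R (u - v) = (a *\<^sub>R u - b *\<^sub>R v) - (a - b) *\<^sub>R u"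
    by (simp add: algebra_simps)
  then have "b * norm (u - v) \<le> norm (a *\<^sub>R u - b *\<^sub>R v) + \<bar>a - b\<bar>"
    using norm_triangle_ineq4 [of "a *\<^sub>R u - b *\<^sub>R v" "(a - b) *\<^sub>R u"] assms
    by (metis abs_of_nonneg mult.right_neutral norm_scaleR)
  with norm_scaleR_diff_ge_radial [OF assms] show ?thesis
    by linarith
qed

definition polar :: "real \<Rightarrow> real \<Rightarrow> complex" where
  "polar r x = complex_of_real r * cis (2 * pi * x)"

lemma polar_eq_scaleR: "polar r x = r *\<^sub>R cis (2 * pi * x)"
  by (simp add: polar_def scaleR_conv_of_real)

lemma norm_polar: "0 \<le> r \<Longrightarrow> cmod (polar r x) = r"
  by (simp add: polar_def norm_mult)

lemma dist_polar_le:
  assumes "0 \<le> r\<^sub>2"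
  shows "dist (polar r\<^sub>1 x) (polar r\<^sub>2 y) \<le> \<bar>r\<^sub>1 - r\<^sub>2\<bar> + 2 * pi * r\<^sub>2 * \<bar>x - y - of_int j\<bar>"
proof -
  have "dist (polar r\<^sub>1 x) (polar r\<^sub>2 y)
      \<le> \<bar>r\<^sub>1 - r\<^sub>2\<bar> + r\<^sub>2 * cmod (cis (2 * pi * x) - cis (2 * pi * y))"
    unfolding dist_norm polar_eq_scaleR using assms by (intro norm_scaleR_diff_le) auto
  also have "\<dots> \<le> \<bar>r\<^sub>1 - r\<^sub>2\<bar> + r\<^sub>2 * (2 * pi * \<bar>x - y - of_int j\<bar>)"
    using assms by (intro add_left_mono mult_left_mono norm_cis_2pi_diff_le)
  finally show ?thesis
    by (simp add: mult_ac)
qed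

lemma dist_polar_ge_radial:
  assumes "0 \<le> r\<^sub>1" "0 \<le> r\<^sub>2"
  shows "\<bar>r\<^sub>1 - r\<^sub>2\<bar> \<le> dist (polar r\<^sub>1 x) (polar r\<^sub>2 y)"
  unfolding dist_norm polar_eq_scaleR using assms by (intro norm_scaleR_diff_ge_radial) auto

lemma dist_polar_ge_angular:
  assumes "0 \<le> r\<^sub>1" "0 \<le> r\<^sub>2" "\<And>j::int. \<delta> \<le> \<bar>x - y - of_int j\<bar>"
  shows "r\<^sub>2 * \<delta> \<le> dist (polar r\<^sub>1 x) (polar r\<^sub>2 y)"
proof -
  have "r\<^sub>2 * (2 * \<delta>) \<le> r\<^sub>2 * cmod (cis (2 * pi * x) - cis (2 * pi * y))"
    using assms by (intro mult_left_mono norm_cis_2pi_diff_ge) auto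
  also have "\<dots> \<le> 2 * dist (polar r\<^sub>1 x) (polar r\<^sub>2 y)"
    unfolding dist_norm polar_eq_scaleR using assms by (intro norm_scaleR_diff_ge_angular) auto
  finally show ?thesis
    by simp
qed

lemma unif_discrete_s_half_if_separated:
  assumes "\<And>x y. x \<in> X \<Longrightarrow> y \<in> X \<Longrightarrow> x \<noteq> y \<Longrightarrow> s \<le> dist x y"
  shows "unif_discrete_s (s / 2) X"
  unfolding unif_discrete_s_def
proof
  fix c :: complex
  have subsingleton: "x = y" if "x \<in> ball c (s / 2) \<inter> X" "y \<in> ball c (s / 2) \<inter> X" for x y
  proof (rule ccontr)
    assume "x \<noteq> y"
    then have "s \<le> dist x y"
      using assms that by blast
    moreover have "dist x y < s"
      using that dist_triangle_half_r [of c x s y] by (auto simp: dist_commute)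
    ultimately show False
      by simp
  qed
  show "card (ball c (s / 2) \<inter> X) \<le> 1 \<and> finite (ball c (s / 2) \<inter> X)"
  proof (cases "ball c (s / 2) \<inter> X = {}")
    case False
    then obtain x where "x \<in> ball c (s / 2) \<inter> X"
      by blast
    with subsingleton have "ball c (s / 2) \<inter> X = {x}"
      by blast
    then show ?thesis
      by simp
  qed simp
qed

lemma unif_discrete_s_eqI:
  assumes "unif_discrete_s s X" "x \<in> X" "y \<in> X" "dist x y < s"
  shows "x = y"
proof -
  have "0 < s"
    using assms(4) zero_le_dist [of x y] by linarith
  then have "x \<in> ball x s \<inter> X" "y \<in> ball x s \<inter> X"
    using assms by auto
  moreover have "finite (ball x s \<inter> X)" "card (ball x s \<inter> X) \<le> Suc 0"
    using assms(1) by (simp_all add: unif_discrete_s_def)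
  ultimately show ?thesis
    by (auto simp: card_le_Suc0_iff_eq)
qed

lemma rel_dense_r_mono: "rel_dense_r r X \<Longrightarrow> r \<le> r' \<Longrightarrow> rel_dense_r r' X"
  unfolding rel_dense_r_def by (meson disjoint_iff subset_ball subsetD)

definition spiral_point :: "real \<Rightarrow> nat \<Rightarrow> complex" where
  "spiral_point \<alpha> n = polar (sqrt (real n)) (real n * \<alpha>)"

lemma sqrt_spiral_eq_image: "sqrt_spiral \<alpha> = spiral_point \<alpha> ` {1..}"
  unfolding sqrt_spiral_def spiral_point_def polar_def
  by (auto simp: cis_conv_exp mult_ac)

lemma norm_spiral_point [simp]: "cmod (spiral_point \<alpha> n) = sqrt (real n)"
  by (simp add: spiral_point_def norm_polar)

lemma inj_spiral_point: "inj (spiral_point \<alpha>)"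
  by (rule injI) (metis norm_spiral_point of_nat_eq_iff real_sqrt_eq_iff)

lemma dist_spiral_points_ge:
  assumes "0 < C" "\<And>(p::int) (q::nat). 1 \<le> q \<Longrightarrow> C \<le> real q * \<bar>real q * \<alpha> - of_int p\<bar>"
    and "1 \<le> n" "n < m"
  shows "min (1/4) C \<le> dist (spiral_point \<alpha> m) (spiral_point \<alpha> n)"
proof -
  define q where "q = m - n"
  have "1 \<le> q" and m_eq: "real m = real n + real q"
    using assms(4) by (simp_all add: q_def)
  show ?thesis
  proof (cases "sqrt (real n) \<le> real q")
    case True
    have "1 \<le> sqrt (real n)"
      using assms(3) by simp
    have "(sqrt (real n) + 1/4)\<^sup>2 = real n + sqrt (real n) / 2 + 1/16"
      by (simp add: power2_eq_square algebra_simps)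
    also have "\<dots> \<le> real m"
      using True \<open>1 \<le> sqrt (real n)\<close> m_eq by linarith
    finally have "sqrt (real n) + 1/4 \<le> sqrt (real m)"
      by (rule real_le_rsqrt)
    then have "1/4 \<le> \<bar>sqrt (real m) - sqrt (real n)\<bar>"
      by linarith
    also have "\<dots> \<le> dist (spiral_point \<alpha> m) (spiral_point \<alpha> n)"
      unfolding spiral_point_def by (rule dist_polar_ge_radial) auto
    finally show ?thesis
      by linarith
  next
    case False
    have "C / real q \<le> \<bar>real m * \<alpha> - real n * \<alpha> - of_int j\<bar>" for j :: int
    proof -
      have "C \<le> real q * \<bar>real q * \<alpha> - of_int j\<bar>"
        using assms(2) \<open>1 \<le> q\<close> by blast
      moreover have "real m * \<alpha> - real n * \<alpha> = real q * \<alpha>"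
        using m_eq by (simp add: algebra_simps)
      ultimately show ?thesis
        using \<open>1 \<le> q\<close> by (simp add: field_simps)
    qed
    then have "sqrt (real n) * (C / real q) \<le> dist (spiral_point \<alpha> m) (spiral_point \<alpha> n)"
      unfolding spiral_point_def by (intro dist_polar_ge_angular) auto
    moreover have "real q * C \<le> sqrt (real n) * C"
      using False assms(1) by (intro mult_right_mono) auto
    then have "C \<le> sqrt (real n) * (C / real q)"
      using \<open>1 \<le> q\<close> by (simp add: field_simps)
    ultimately show ?thesis
      by linarith
  qed
qed

lemma badly_approximable_imp_unif_discrete:
  assumes "badly_approximable \<alpha>"
  shows "unif_discrete (sqrt_spiral \<alpha>)"
proof -
  obtain C where "0 < C"
    and C: "\<And>(p::int) (q::nat). 1 \<le> q \<Longrightarrow> C \<le> real q * \<bar>real q * \<alpha> - of_int p\<bar>"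
    using assms unfolding badly_approximable_def by auto
  have "min (1/4) C \<le> dist x y"
    if xy: "x \<in> sqrt_spiral \<alpha>" "y \<in> sqrt_spiral \<alpha>" "x \<noteq> y" for x y
  proof -
    obtain n m where "x = spiral_point \<alpha> n" "y = spiral_point \<alpha> m" "1 \<le> n" "1 \<le> m"
      using xy(1,2) unfolding sqrt_spiral_eq_image by auto
    moreover from this have "n \<noteq> m"
      using xy(3) by blast
    ultimately show ?thesis
      using dist_spiral_points_ge [OF \<open>0 < C\<close> C, of n m] dist_spiral_points_ge [OF \<open>0 < C\<close> C, of m n]
      by (cases "n < m") (auto simp: dist_commute)
  qed
  then have "unif_discrete_s (min (1/4) C / 2) (sqrt_spiral \<alpha>)"
    by (rule unif_discrete_s_half_if_separated)
  then show ?thesis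
    unfolding unif_discrete_def using \<open>0 < C\<close> by (intro exI [of _ "min (1/4) C / 2"]) auto
qed

lemma real_sqrt_add_le:
  fixes a b :: real
  assumes "0 < a" "0 \<le> b"
  shows "sqrt (a\<^sup>2 + b) \<le> a + b / (2 * a)"
proof (rule real_le_lsqrt)
  have "(a + b / (2 * a))\<^sup>2 = a\<^sup>2 + b + (b / (2 * a))\<^sup>2"
    using assms by (simp add: power2_eq_square field_simps)
  then show "a\<^sup>2 + b \<le> (a + b / (2 * a))\<^sup>2"
    by simp
qed (use assms in auto)

lemma dist_spiral_points_shift_le:
  fixes q k :: nat and p :: int
  assumes "1 \<le> q" "1 \<le> k"
  shows "dist (spiral_point \<alpha> (q\<^sup>2 * k + q)) (spiral_point \<alpha> (q\<^sup>2 * k))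
    \<le> 1 / (2 * sqrt (real k)) + 2 * pi * sqrt (real k) * (real q * \<bar>real q * \<alpha> - of_int p\<bar>)"
proof -
  define n where "n = q\<^sup>2 * k"
  have sqrt_n: "sqrt (real n) = real q * sqrt (real k)"
    by (simp add: n_def real_sqrt_mult)
  have "sqrt (real (n + q)) = sqrt ((real q * sqrt (real k))\<^sup>2 + real q)"
    by (simp add: n_def power_mult_distrib)
  also have "\<dots> \<le> real q * sqrt (real k) + real q / (2 * (real q * sqrt (real k)))"
    using assms by (intro real_sqrt_add_le) auto
  also have "real q / (2 * (real q * sqrt (real k))) = 1 / (2 * sqrt (real k))"
    using assms by simp
  finally have "sqrt (real (n + q)) \<le> sqrt (real n) + 1 / (2 * sqrt (real k))"
    unfolding sqrt_n .
  moreover have "sqrt (real n) \<le> sqrt (real (n + q))"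
    by simp
  ultimately have radial: "\<bar>sqrt (real (n + q)) - sqrt (real n)\<bar> \<le> 1 / (2 * sqrt (real k))"
    by (auto simp: abs_le_iff)
  have "dist (spiral_point \<alpha> (n + q)) (spiral_point \<alpha> n)
      \<le> \<bar>sqrt (real (n + q)) - sqrt (real n)\<bar>
        + 2 * pi * sqrt (real n) * \<bar>real (n + q) * \<alpha> - real n * \<alpha> - of_int p\<bar>"
    unfolding spiral_point_def by (rule dist_polar_le) simp
  also have "\<dots> \<le> 1 / (2 * sqrt (real k))
        + 2 * pi * sqrt (real n) * \<bar>real (n + q) * \<alpha> - real n * \<alpha> - of_int p\<bar>"
    using radial by simp
  also have "\<dots> = 1 / (2 * sqrt (real k)) + 2 * pi * sqrt (real k) * (real q * \<bar>real q * \<alpha> - of_int p\<bar>)"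
    by (simp add: sqrt_n algebra_simps)
  finally show ?thesis
    by (simp add: n_def)
qed

lemma unif_discrete_imp_badly_approximable:
  assumes "unif_discrete (sqrt_spiral \<alpha>)"
  shows "badly_approximable \<alpha>"
proof (rule ccontr)
  assume not_ba: "\<not> badly_approximable \<alpha>"
  obtain s where "0 < s" and disc: "unif_discrete_s s (sqrt_spiral \<alpha>)"
    using assms unfolding unif_discrete_def by blast
  obtain k :: nat where k: "1 / s\<^sup>2 < real k"
    using reals_Archimedean2 by blast
  have "0 < 1 / s\<^sup>2"
    using \<open>0 < s\<close> by simp
  with k have "0 < real k"
    by linarith
  then have "1 \<le> k"
    by simp
  have "(1 / s)\<^sup>2 < real k"
    using k by (simp add: power_one_over)
  then have "1 / s < sqrt (real k)"
    by (rule real_less_rsqrt)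
  then have radial: "1 / (2 * sqrt (real k)) < s / 2"
    using \<open>0 < s\<close> \<open>1 \<le> k\<close> by (simp add: field_simps)
  define C where "C = s / (4 * pi * sqrt (real k))"
  have "0 < C"
    using \<open>0 < s\<close> \<open>1 \<le> k\<close> by (simp add: C_def)
  then obtain p :: int and q :: nat where "1 \<le> q" and pq: "real q * \<bar>real q * \<alpha> - of_int p\<bar> < C"
    using not_ba unfolding badly_approximable_def by (meson not_le)
  have "2 * pi * sqrt (real k) * (real q * \<bar>real q * \<alpha> - of_int p\<bar>) < 2 * pi * sqrt (real k) * C"
    using pq \<open>1 \<le> k\<close> by (intro mult_strict_left_mono) auto
  also have "\<dots> = s / 2"
    using \<open>1 \<le> k\<close> by (simp add: C_def)
  finally have "dist (spiral_point \<alpha> (q\<^sup>2 * k + q)) (spiral_point \<alpha> (q\<^sup>2 * k)) < s"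
    using dist_spiral_points_shift_le [OF \<open>1 \<le> q\<close> \<open>1 \<le> k\<close>, of \<alpha> p] radial by linarith
  moreover have "spiral_point \<alpha> (q\<^sup>2 * k + q) \<in> sqrt_spiral \<alpha>" "spiral_point \<alpha> (q\<^sup>2 * k) \<in> sqrt_spiral \<alpha>"
    using \<open>1 \<le> q\<close> \<open>1 \<le> k\<close> by (auto simp: sqrt_spiral_eq_image)
  ultimately have "spiral_point \<alpha> (q\<^sup>2 * k + q) = spiral_point \<alpha> (q\<^sup>2 * k)"
    using unif_discrete_s_eqI [OF disc] by blast
  then show False
    using inj_spiral_point \<open>1 \<le> q\<close> by (simp add: inj_eq)
qed

lemma dist_to_midpoint_angles_ge:
  fixes q n :: nat and p j :: int
  assumes "1 \<le> q" "\<bar>(real n - c) * (\<alpha> - of_int p / real q)\<bar> \<le> 1 / (4 * real q)"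
  shows "1 / (4 * real q)
    \<le> \<bar>real n * \<alpha> - (c * (\<alpha> - of_int p / real q) + 1 / (2 * real q)) - of_int j\<bar>"
proof -
  define N :: int where "N = 2 * int n * p - 1 - 2 * int q * j"
  have "odd N"
    by (simp add: N_def)
  then have "1 \<le> \<bar>real_of_int N\<bar>"
    by (cases "N = 0") auto
  then have "2 * (1 / (4 * real q)) \<le> \<bar>real_of_int N / (2 * real q)\<bar>"
    by (simp add: abs_divide divide_right_mono)
  moreover have "real n * \<alpha> - (c * (\<alpha> - of_int p / real q) + 1 / (2 * real q)) - of_int j
      = real_of_int N / (2 * real q) + (real n - c) * (\<alpha> - of_int p / real q)"
    using assms(1) by (simp add: N_def field_simps)
  ultimately show ?thesis
    using assms(2) by linarith
qed

lemma abs_square_diff_le: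
  fixes x y r :: real
  assumes "0 \<le> x" "0 \<le> y" "\<bar>x - y\<bar> \<le> r"
  shows "\<bar>x\<^sup>2 - y\<^sup>2\<bar> \<le> r * (2 * y + r)"
proof -
  have "x\<^sup>2 - y\<^sup>2 = (x - y) * (x + y)"
    by (simp add: power2_eq_square algebra_simps)
  then have "\<bar>x\<^sup>2 - y\<^sup>2\<bar> = \<bar>x - y\<bar> * (x + y)"
    using assms(1,2) by (simp add: abs_mult)
  also have "\<dots> \<le> r * (2 * y + r)"
    using assms by (intro mult_mono) auto
  finally show ?thesis .
qed

lemma dist_spiral_point_hole_ge:
  fixes q n :: nat and p :: int and r :: real
  assumes "1 \<le> r" "1 \<le> q" "real q * \<bar>real q * \<alpha> - of_int p\<bar> \<le> 1 / (36 * r\<^sup>2)"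
  defines "\<rho> \<equiv> 4 * r * real q"
  shows "r \<le> dist (polar \<rho> (\<rho>\<^sup>2 * (\<alpha> - of_int p / real q) + 1 / (2 * real q))) (spiral_point \<alpha> n)"
proof -
  define \<eta> where "\<eta> = \<alpha> - of_int p / real q"
  have "0 \<le> \<rho>" and "0 < real q"
    using assms by (simp_all add: \<rho>_def)
  have "real q * \<bar>real q * \<alpha> - of_int p\<bar> = \<bar>\<eta>\<bar> * (real q)\<^sup>2"
    using \<open>0 < real q\<close> by (simp add: \<eta>_def power2_eq_square field_simps flip: abs_mult)
  then have eta: "\<bar>\<eta>\<bar> \<le> 1 / (36 * r\<^sup>2) / (real q)\<^sup>2"
    using assms(3) \<open>0 < real q\<close> by (subst pos_le_divide_eq) simp_all
  show ?thesis
  proof (cases "r \<le> \<bar>sqrt (real n) - \<rho>\<bar>")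
    case True
    moreover have "\<bar>\<rho> - sqrt (real n)\<bar>
        \<le> dist (polar \<rho> (\<rho>\<^sup>2 * (\<alpha> - of_int p / real q) + 1 / (2 * real q))) (spiral_point \<alpha> n)"
      unfolding spiral_point_def using \<open>0 \<le> \<rho>\<close> by (intro dist_polar_ge_radial) auto
    ultimately show ?thesis
      by (simp add: abs_minus_commute)
  next
    case False
    have "\<bar>real n - \<rho>\<^sup>2\<bar> \<le> r * (2 * \<rho> + r)"
      using abs_square_diff_le [of "sqrt (real n)" \<rho> r] False \<open>0 \<le> \<rho>\<close> by simp
    also have "\<dots> \<le> 9 * r\<^sup>2 * real q"
      using assms(1,2) by (simp add: \<rho>_def power2_eq_square algebra_simps)
    finally have "\<bar>(real n - \<rho>\<^sup>2) * \<eta>\<bar> \<le> (9 * r\<^sup>2 * real q) * (1 / (36 * r\<^sup>2) / (real q)\<^sup>2)"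
      unfolding abs_mult using eta by (intro mult_mono) auto
    also have "\<dots> = 1 / (4 * real q)"
      using assms(1,2) by (simp add: power2_eq_square field_simps)
    finally have "\<And>j::int. 1 / (4 * real q) \<le> \<bar>real n * \<alpha> - (\<rho>\<^sup>2 * \<eta> + 1 / (2 * real q)) - of_int j\<bar>"
      unfolding \<eta>_def using assms(2) by (intro dist_to_midpoint_angles_ge) auto
    then have "\<rho> * (1 / (4 * real q))
        \<le> dist (polar (sqrt (real n)) (real n * \<alpha>)) (polar \<rho> (\<rho>\<^sup>2 * \<eta> + 1 / (2 * real q)))"
      using \<open>0 \<le> \<rho>\<close> by (intro dist_polar_ge_angular) auto
    moreover have "\<rho> * (1 / (4 * real q)) = r"
      using \<open>0 < real q\<close> by (simp add: \<rho>_def)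
    ultimately show ?thesis
      by (simp add: spiral_point_def \<eta>_def dist_commute)
  qed
qed

lemma rel_dense_imp_badly_approximable:
  assumes "rel_dense (sqrt_spiral \<alpha>)"
  shows "badly_approximable \<alpha>"
proof (rule ccontr)
  assume not_ba: "\<not> badly_approximable \<alpha>"
  obtain r0 where "0 < r0" "rel_dense_r r0 (sqrt_spiral \<alpha>)"
    using assms unfolding rel_dense_def by blast
  then have dense: "rel_dense_r (max r0 1) (sqrt_spiral \<alpha>)"
    using rel_dense_r_mono by simp
  define r where "r = max r0 1"
  have "1 \<le> r" "0 < 1 / (36 * r\<^sup>2)"
    by (simp_all add: r_def)
  then obtain p :: int and q :: nat
    where "1 \<le> q" and pq: "real q * \<bar>real q * \<alpha> - of_int p\<bar> < 1 / (36 * r\<^sup>2)"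
    using not_ba unfolding badly_approximable_def by (meson not_le)
  define \<rho> where "\<rho> = 4 * r * real q"
  define z where "z = polar \<rho> (\<rho>\<^sup>2 * (\<alpha> - of_int p / real q) + 1 / (2 * real q))"
  obtain n where "spiral_point \<alpha> n \<in> ball z r"
    using dense unfolding rel_dense_r_def sqrt_spiral_eq_image r_def by blast
  then have "dist z (spiral_point \<alpha> n) < r"
    by simp
  moreover have "r \<le> dist z (spiral_point \<alpha> n)"
    unfolding z_def \<rho>_def using \<open>1 \<le> r\<close> \<open>1 \<le> q\<close> pq
    by (intro dist_spiral_point_hole_ge) auto
  ultimately show False
    by linarith
qed

lemma coprime_multiple_cong:
  fixes h k c :: int
  assumes "coprime h k" "0 < k"
  obtains i t where "0 \<le> i" "i < k" "i * h = c + k * t"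
proof -
  obtain u v where uv: "u * h + v * k = 1"
    using bezout_int [of h k] assms(1) by (auto simp: coprime_iff_gcd_eq_1)
  define i where "i = (c * u) mod k"
  define t where "t = - (c * v + (c * u div k) * h)"
  have i_eq: "i = c * u - (c * u div k) * k"
    by (simp add: i_def minus_div_mult_eq_mod)
  have "i * h - (c + k * t) = c * (u * h + v * k - 1)"
    by (simp add: i_eq t_def algebra_simps)
  then have "i * h = c + k * t"
    using uv by simp
  moreover have "0 \<le> i" "i < k"
    using assms(2) by (simp_all add: i_def)
  ultimately show ?thesis
    using that by blast
qed

lemma round_mult_div_approx:
  fixes k y :: real
  assumes "0 < k"
  shows "\<bar>of_int (round (k * y)) / k - y\<bar> \<le> 1 / (2 * k)"
proof -
  have "\<bar>of_int (round (k * y)) - k * y\<bar> \<le> 1 / 2"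
    using of_int_round_abs_le [of "k * y"] by (simp add: abs_minus_commute)
  then have "\<bar>of_int (round (k * y)) - k * y\<bar> / k \<le> (1 / 2) / k"
    using assms by (intro divide_right_mono) auto
  moreover have "of_int (round (k * y)) / k - y = (of_int (round (k * y)) - k * y) / k"
    using assms by (simp add: field_simps)
  ultimately show ?thesis
    using assms by (simp add: abs_divide)
qed

lemma multiples_approx_angle:
  fixes h k :: int and \<alpha> y :: real
  assumes "coprime h k" "0 < k"
  obtains i :: nat and t :: int
  where "int i < k" "\<bar>real i * \<alpha> - y - of_int t\<bar> \<le> 1 / (2 * of_int k) + \<bar>of_int k * \<alpha> - of_int h\<bar>"
proof -
  define c where "c = round (of_int k * y)"
  obtain i t where "0 \<le> i" "i < k" and cong: "i * h = c + k * t"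
    using coprime_multiple_cong [OF assms] by blast
  define \<eta> where "\<eta> = \<alpha> - of_int h / of_int k"
  have "real_of_int k > 0"
    using assms(2) by simp
  have split: "real_of_int i * \<alpha> - y - of_int t = (of_int c / of_int k - y) + of_int i * \<eta>"
  proof -
    have "real_of_int i * of_int h = of_int c + of_int k * of_int t"
      using arg_cong [OF cong, of real_of_int] by simp
    then show ?thesis
      using \<open>real_of_int k > 0\<close> by (simp add: \<eta>_def field_simps)
  qed
  have rounding: "\<bar>of_int c / of_int k - y\<bar> \<le> 1 / (2 * of_int k)"
    unfolding c_def using \<open>real_of_int k > 0\<close> by (rule round_mult_div_approx)
  have drift: "\<bar>real_of_int i * \<eta>\<bar> \<le> \<bar>of_int k * \<alpha> - of_int h\<bar>"
  proof -
    have "\<bar>real_of_int i * \<eta>\<bar> \<le> \<bar>of_int k * \<eta>\<bar>"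
      using \<open>0 \<le> i\<close> \<open>i < k\<close> by (simp add: abs_mult mult_right_mono)
    also have "of_int k * \<eta> = of_int k * \<alpha> - of_int h"
      using \<open>real_of_int k > 0\<close> by (simp add: \<eta>_def field_simps)
    finally show ?thesis .
  qed
  have "\<bar>real_of_int i * \<alpha> - y - of_int t\<bar>
      \<le> \<bar>of_int c / of_int k - y\<bar> + \<bar>real_of_int i * \<eta>\<bar>"
    unfolding split by (rule abs_triangle_ineq)
  also have "\<dots> \<le> 1 / (2 * of_int k) + \<bar>of_int k * \<alpha> - of_int h\<bar>"
    using rounding drift by linarith
  finally have "\<bar>real (nat i) * \<alpha> - y - of_int t\<bar> \<le> 1 / (2 * of_int k) + \<bar>of_int k * \<alpha> - of_int h\<bar>"
    using \<open>0 \<le> i\<close> by simp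
  moreover have "int (nat i) < k"
    using \<open>0 \<le> i\<close> \<open>i < k\<close> by simp
  ultimately show ?thesis
    using that by blast
qed

lemma Dirichlet_multiples_approx_every_angle:
  fixes \<alpha> :: real and Q :: nat
  assumes "0 < Q"
  obtains k :: nat and h :: int
  where "0 < k" "k \<le> Q" "\<bar>real k * \<alpha> - of_int h\<bar> < 1 / real Q"
    and "\<And>y. \<exists>i<k. \<exists>t::int. \<bar>real i * \<alpha> - y - of_int t\<bar> \<le> 1 / (2 * real k) + 1 / real Q"
proof -
  obtain h k where cop: "coprime h k" "0 < k" "k \<le> int Q"
    and approx: "\<bar>of_int k * \<alpha> - of_int h\<bar> < 1 / real Q"
    using Dirichlet_approx_coprime [OF assms] by blast
  have "\<exists>i<nat k. \<exists>t::int. \<bar>real i * \<alpha> - y - of_int t\<bar> \<le> 1 / (2 * real (nat k)) + 1 / real Q" for y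
  proof -
    obtain i t where "int i < k"
      and "\<bar>real i * \<alpha> - y - of_int t\<bar> \<le> 1 / (2 * of_int k) + \<bar>of_int k * \<alpha> - of_int h\<bar>"
      using multiples_approx_angle [OF cop(1,2)] by blast
    then show ?thesis
      using approx cop(2) by (intro exI [of _ i] conjI exI [of _ t]) auto
  qed
  moreover have "0 < nat k" "nat k \<le> Q" "\<bar>real (nat k) * \<alpha> - of_int h\<bar> < 1 / real Q"
    using cop(2,3) approx by auto
  ultimately show ?thesis
    using that by blast
qed

lemma index_near_polar:
  fixes \<rho> \<phi> \<delta> :: real and k :: nat
  assumes "0 \<le> \<rho>" "real k \<le> \<rho>"
    and "\<And>y. \<exists>i<k. \<exists>t::int. \<bar>real i * \<alpha> - y - of_int t\<bar> \<le> \<delta>"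
  obtains n :: nat and t :: int
  where "\<rho>\<^sup>2 \<le> real n" "\<bar>sqrt (real n) - \<rho>\<bar> \<le> 1" "\<bar>real n * \<alpha> - \<phi> - of_int t\<bar> \<le> \<delta>"
proof -
  define a where "a = nat \<lceil>\<rho>\<^sup>2\<rceil>"
  have a: "\<rho>\<^sup>2 \<le> real a" "real a < \<rho>\<^sup>2 + 1"
    by (simp_all add: a_def) linarith+
  obtain i t where "i < k" and angle: "\<bar>real i * \<alpha> - (\<phi> - real a * \<alpha>) - of_int t\<bar> \<le> \<delta>"
    using assms(3) by blast
  have "real i + 1 \<le> \<rho>"
    using \<open>i < k\<close> assms(2) by linarith
  then have n_bounds: "\<rho>\<^sup>2 \<le> real (a + i)" "real (a + i) \<le> (\<rho> + 1)\<^sup>2"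
    using a by (simp_all add: power2_eq_square algebra_simps)
  have "\<rho> \<le> sqrt (real (a + i))"
    using real_sqrt_le_mono [OF n_bounds(1)] assms(1) by simp
  moreover have "sqrt (real (a + i)) \<le> \<rho> + 1"
    using n_bounds(2) assms(1) by (intro real_le_lsqrt) auto
  ultimately have "\<bar>sqrt (real (a + i)) - \<rho>\<bar> \<le> 1"
    by linarith
  moreover have "\<bar>real (a + i) * \<alpha> - \<phi> - of_int t\<bar> \<le> \<delta>"
    using angle by (simp add: algebra_simps)
  ultimately show ?thesis
    using n_bounds(1) that by blast
qed

lemma badly_approximable_multiples_dense:
  assumes "0 < C" "\<And>(p::int) (q::nat). 1 \<le> q \<Longrightarrow> C \<le> real q * \<bar>real q * \<alpha> - of_int p\<bar>"
    and "1 \<le> \<rho>"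
  obtains k :: nat
  where "real k \<le> \<rho>" "\<And>y. \<exists>i<k. \<exists>t::int. \<bar>real i * \<alpha> - y - of_int t\<bar> \<le> (1 / C + 2) / \<rho>"
proof -
  define Q where "Q = nat \<lfloor>\<rho>\<rfloor>"
  have Q_eq: "real Q = of_int \<lfloor>\<rho>\<rfloor>"
    using \<open>1 \<le> \<rho>\<close> by (simp add: Q_def)
  have "1 \<le> real Q"
    using \<open>1 \<le> \<rho>\<close> by (simp add: Q_eq)
  have Q: "real Q \<le> \<rho>" "\<rho> \<le> 2 * real Q" "0 < Q"
  proof -
    show "real Q \<le> \<rho>"
      unfolding Q_eq by (rule of_int_floor_le)
    show "\<rho> \<le> 2 * real Q"
      using real_of_int_floor_add_one_gt [of \<rho>] \<open>1 \<le> real Q\<close> unfolding Q_eq by linarith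
    show "0 < Q"
      using \<open>1 \<le> real Q\<close> by simp
  qed
  obtain k h where k: "0 < k" "k \<le> Q" "\<bar>real k * \<alpha> - of_int h\<bar> < 1 / real Q"
    and angles: "\<And>y. \<exists>i<k. \<exists>t::int. \<bar>real i * \<alpha> - y - of_int t\<bar> \<le> 1 / (2 * real k) + 1 / real Q"
    using Dirichlet_multiples_approx_every_angle [OF \<open>0 < Q\<close>] by blast
  have "C \<le> real k * \<bar>real k * \<alpha> - of_int h\<bar>"
    using assms(2) k(1) by simp
  also have "\<dots> < real k * (1 / real Q)"
    using k by (intro mult_strict_left_mono) auto
  finally have "C * real Q < real k"
    using Q(3) by (simp add: field_simps)
  moreover have "C * \<rho> \<le> C * (2 * real Q)"
    using Q(2) \<open>0 < C\<close> by (intro mult_left_mono) auto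
  ultimately have "C * \<rho> \<le> 2 * real k"
    by linarith
  then have "1 / (2 * real k) \<le> 1 / C / \<rho>"
    using k(1) \<open>0 < C\<close> \<open>1 \<le> \<rho>\<close> by (simp add: field_simps)
  moreover have "1 / real Q \<le> 2 / \<rho>"
    using Q by (simp add: field_simps)
  ultimately have "1 / (2 * real k) + 1 / real Q \<le> (1 / C + 2) / \<rho>"
    by (simp add: add_divide_distrib)
  then have "\<exists>i<k. \<exists>t::int. \<bar>real i * \<alpha> - y - of_int t\<bar> \<le> (1 / C + 2) / \<rho>" for y
    using angles [of y] by (meson order_trans)
  moreover have "real k \<le> \<rho>"
    using k(2) Q(1) by (meson of_nat_le_iff order_trans)
  ultimately show ?thesis
    using that by blast
qed

lemma spiral_point_near:
  assumes "0 < C" "\<And>(p::int) (q::nat). 1 \<le> q \<Longrightarrow> C \<le> real q * \<bar>real q * \<alpha> - of_int p\<bar>"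
    and "2 \<le> cmod z"
  obtains n where "1 \<le> n" "dist z (spiral_point \<alpha> n) \<le> 1 + 2 * pi * (1 / C + 2)"
proof -
  define \<rho> where "\<rho> = cmod z"
  have "2 \<le> \<rho>"
    using assms(3) by (simp add: \<rho>_def)
  then obtain k where "real k \<le> \<rho>"
    and angles: "\<And>y. \<exists>i<k. \<exists>t::int. \<bar>real i * \<alpha> - y - of_int t\<bar> \<le> (1 / C + 2) / \<rho>"
    using badly_approximable_multiples_dense [OF assms(1,2), of \<rho>] by auto
  define \<phi> where "\<phi> = Arg z / (2 * pi)"
  have z: "z = polar \<rho> \<phi>"
    using rcis_cmod_Arg [of z] by (simp add: polar_def rcis_def \<rho>_def \<phi>_def)
  obtain n t where "\<rho>\<^sup>2 \<le> real n" and radial: "\<bar>sqrt (real n) - \<rho>\<bar> \<le> 1"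
    and angle: "\<bar>real n * \<alpha> - \<phi> - of_int t\<bar> \<le> (1 / C + 2) / \<rho>"
    using index_near_polar [of \<rho> k \<alpha> _ \<phi>] angles \<open>real k \<le> \<rho>\<close> \<open>2 \<le> \<rho>\<close> by force
  have "dist (polar (sqrt (real n)) (real n * \<alpha>)) (polar \<rho> \<phi>)
      \<le> \<bar>sqrt (real n) - \<rho>\<bar> + 2 * pi * (\<rho> * \<bar>real n * \<alpha> - \<phi> - of_int t\<bar>)"
    using dist_polar_le [of \<rho> "sqrt (real n)" "real n * \<alpha>" \<phi> t] \<open>2 \<le> \<rho>\<close>
    by (simp add: mult.assoc)
  also have "\<dots> \<le> 1 + 2 * pi * (\<rho> * ((1 / C + 2) / \<rho>))"
    using radial angle \<open>2 \<le> \<rho>\<close> by (intro add_mono mult_left_mono) auto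
  also have "\<dots> = 1 + 2 * pi * (1 / C + 2)"
    using \<open>2 \<le> \<rho>\<close> by simp
  finally have "dist z (spiral_point \<alpha> n) \<le> 1 + 2 * pi * (1 / C + 2)"
    by (simp add: z spiral_point_def dist_commute)
  moreover have "2 * 2 \<le> \<rho>\<^sup>2"
    using \<open>2 \<le> \<rho>\<close> unfolding power2_eq_square by (intro mult_mono) auto
  then have "1 \<le> n"
    using \<open>\<rho>\<^sup>2 \<le> real n\<close> by simp
  ultimately show ?thesis
    using that by blast
qed

lemma badly_approximable_imp_rel_dense:
  assumes "badly_approximable \<alpha>"
  shows "rel_dense (sqrt_spiral \<alpha>)"
proof -
  obtain C where "0 < C"
    and C: "\<And>(p::int) (q::nat). 1 \<le> q \<Longrightarrow> C \<le> real q * \<bar>real q * \<alpha> - of_int p\<bar>"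
    using assms unfolding badly_approximable_def by auto
  define R where "R = 3 + 2 * pi * (1 / C + 2)"
  have "3 \<le> R"
    using \<open>0 < C\<close> by (simp add: R_def)
  have "\<exists>n\<ge>1. dist z (spiral_point \<alpha> n) < R" for z
  proof (cases "cmod z < 2")
    case True
    have "dist z (spiral_point \<alpha> 1) \<le> cmod z + 1"
      using norm_triangle_ineq4 [of z "spiral_point \<alpha> 1"] by (simp add: dist_norm)
    then show ?thesis
      using True \<open>3 \<le> R\<close> by (intro exI [of _ 1]) auto
  next
    case False
    then have "2 \<le> cmod z"
      by simp
    then obtain n where "1 \<le> n" "dist z (spiral_point \<alpha> n) \<le> 1 + 2 * pi * (1 / C + 2)"
      using spiral_point_near [OF \<open>0 < C\<close> C] by blast
    then show ?thesis
      by (intro exI [of _ n]) (simp add: R_def)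
  qed
  then have "ball z R \<inter> sqrt_spiral \<alpha> \<noteq> {}" for z
    unfolding sqrt_spiral_eq_image by (metis IntI atLeast_iff empty_iff imageI mem_ball)
  then have "rel_dense_r R (sqrt_spiral \<alpha>)"
    unfolding rel_dense_r_def by blast
  then show ?thesis
    unfolding rel_dense_def using \<open>3 \<le> R\<close> by (intro exI [of _ R]) simp
qed

theorem theorem2:
  fixes \<alpha> :: real
  assumes "0 \<le> \<alpha>" and "\<alpha> < 1"
  shows "(rel_dense (sqrt_spiral \<alpha>) \<longleftrightarrow> unif_discrete (sqrt_spiral \<alpha>))
       \<and> (unif_discrete (sqrt_spiral \<alpha>) \<longleftrightarrow> delone (sqrt_spiral \<alpha>))
       \<and> (delone (sqrt_spiral \<alpha>) \<longleftrightarrow> badly_approximable \<alpha>)"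
  using badly_approximable_imp_rel_dense rel_dense_imp_badly_approximable
    badly_approximable_imp_unif_discrete unif_discrete_imp_badly_approximable
  unfolding delone_def by blast

end
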